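(* Let $\mathbb{F}=\mathbb{F}_q$ be a finite field with $q$ elements, $m>1$ an integer, and $R=\mathbb{F}^{m\times m}$. Then the normalized homogeneous weight $\omega$ on $R$ is given by \[ \omega(A)=\frac{(-1)^{r+1}q^{\binom{r}{2}}}{\alpha_r(q^m)}+1,\qquad\text{where } r=\mathrm{rk}(A), \] for every $A\in R$.
   Context: $\alpha_r(x)=\prod_{i=0}^{r-1}(x-q^i)$ (so $\alpha_0=1$), and $\binom{r}{2}=r(r-1)/2$. The normalized homogeneous weight on a finite Frobenius ring $R$ is the unique map $\omega:R\to\mathbb{R}$ with $\omega(0)=0$, $\omega(x)=\omega(y)$ whenever $Rx=Ry$, and $\sum_{y\in Rx}\omega(y)=|Rx|$ for every $x\in R\setminus\{0\}$. *)

theory Defs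
  imports "Jordan_Normal_Form.DL_Rank"
begin

definition alpha :: "nat \<Rightarrow> nat \<Rightarrow> real \<Rightarrow> real" where
  "alpha q r x = (\<Prod>i<r. (x - real q ^ i))"

definition mat_left_ideal :: "nat \<Rightarrow> 'a::field mat \<Rightarrow> 'a mat set" where
  "mat_left_ideal m A = {B * A | B. B \<in> carrier_mat m m}"

definition normalized_homogeneous_weight :: "nat \<Rightarrow> ('a::field mat \<Rightarrow> real) \<Rightarrow> bool" where
  "normalized_homogeneous_weight m w \<longleftrightarrow>
     w (0\<^sub>m m m) = 0 \<and>
     (\<forall>x\<in>carrier_mat m m. \<forall>y\<in>carrier_mat m m.
        mat_left_ideal m x = mat_left_ideal m y \<longrightarrow> w x = w y) \<and>
     (\<forall>x\<in>carrier_mat m m. x \<noteq> 0\<^sub>m m m \<longrightarrow>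
        (\<Sum>y\<in>mat_left_ideal m x. w y) = real (card (mat_left_ideal m x)))"

end

theory Submission
  imports Defs
begin

text \<open>
  For B * A in the left ideal R A, the columns of B * A are determined by the images under B of a
  basis chosen among the columns of A, and these images can be prescribed arbitrarily. So R A is in
  bijection with the lists of rk A vectors of F^m, and rk (B * A) is the dimension of the span of
  the corresponding list. Summing a function of the rank over R A thus reduces to counting lists of
  vectors by the dimension of their span: appending a vector to a list spanning a space of
  dimension s keeps the dimension in q^s ways and raises it by one in the remaining ones. The
  function s \<mapsto> (-1)^s q^(s choose 2) / \<alpha>_s(q^m) is annihilated by this one-step recursion, which
  makes the sum of the candidate weight over R A equal to q^(m rk A) = |R A|. A normalized
  homogeneous weight is unique: by induction on |R A|, the defining sum over R A determines the
  common value on the generators of R A from the values on strictly smaller ideals.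
\<close>

section \<open>The span extension recursion\<close>

definition span_extension :: "real \<Rightarrow> nat \<Rightarrow> (nat \<Rightarrow> real) \<Rightarrow> nat \<Rightarrow> real" where
  "span_extension q n h s = q ^ s * h s + (q ^ n - q ^ s) * h (Suc s)"

text \<open>(-1)^s q^(s choose 2) is the Moebius function \<mu>(0, V) of the lattice of subspaces of an
  s-dimensional space V over F_q.\<close>
definition mobius_ratio :: "nat \<Rightarrow> nat \<Rightarrow> nat \<Rightarrow> real" where
  "mobius_ratio q n s = (-1) ^ s * real q ^ (s choose 2) / alpha q s (real q ^ n)"

lemma alpha_Suc: "alpha q (Suc s) x = alpha q s x * (x - real q ^ s)"
  unfolding alpha_def by simp

lemma alpha_power_nonzero:
  assumes "q \<ge> 2" "s \<le> n"
  shows "alpha q s (real q ^ n) \<noteq> 0"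
proof -
  have "real q ^ n - real q ^ i \<noteq> 0" if "i < s" for i
    using power_strict_increasing[of i n "real q"] assms that by simp
  then show ?thesis unfolding alpha_def by simp
qed

lemma span_extension_mobius_ratio:
  assumes q: "q \<ge> 2" and s: "s < n"
  shows "span_extension (real q) n (mobius_ratio q n) s = 0"
proof -
  have a: "alpha q s (real q ^ n) \<noteq> 0" using alpha_power_nonzero[OF q] s by simp
  have d: "real q ^ n - real q ^ s \<noteq> 0"
    using power_strict_increasing[OF s, of "real q"] q by simp
  have "Suc s choose 2 = (s choose 2) + s" by (cases s) (auto simp: choose_two)
  then have "(real q ^ n - real q ^ s) * mobius_ratio q n (Suc s) = - (real q ^ s * mobius_ratio q n s)"
    using a d unfolding mobius_ratio_def alpha_Suc by (simp add: power_add field_simps)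
  then show ?thesis unfolding span_extension_def by simp
qed

lemma funpow_span_extension_mobius_ratio:
  assumes q: "q \<ge> 2"
  shows "s + k < n \<Longrightarrow> (span_extension (real q) n ^^ Suc k) (mobius_ratio q n) s = 0"
proof (induction k arbitrary: s)
  case 0
  then show ?case using span_extension_mobius_ratio[OF q] by simp
next
  case (Suc k)
  let ?E = "span_extension (real q) n" and ?g = "(span_extension (real q) n ^^ Suc k) (mobius_ratio q n)"
  have "(?E ^^ Suc (Suc k)) (mobius_ratio q n) s = ?E ?g s"
    by (simp only: funpow.simps(2) comp_apply)
  also have "\<dots> = 0"
  proof -
    have "?g s = 0" "?g (Suc s) = 0" using Suc.IH[of s] Suc.IH[of "Suc s"] Suc.prems by simp_all
    then show ?thesis by (simp only: span_extension_def mult_zero_right add_0)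
  qed
  finally show ?case .
qed

lemma funpow_span_extension_one_minus:
  "(span_extension q n ^^ k) (\<lambda>s. 1 - g s) = (\<lambda>s. (q ^ n) ^ k - (span_extension q n ^^ k) g s)"
proof (induction k)
  case (Suc k)
  show ?case unfolding funpow.simps comp_def Suc.IH
    by (simp add: span_extension_def fun_eq_iff algebra_simps)
qed simp

section \<open>Lists of vectors over a finite field\<close>

definition vec_lists :: "nat \<Rightarrow> nat \<Rightarrow> 'a vec list set" where
  "vec_lists n r = {ws. set ws \<subseteq> carrier_vec n \<and> length ws = r}"

lemma vec_lists_Suc:
  "vec_lists n (Suc r) = (\<lambda>(ws, v). ws @ [v]) ` (vec_lists n r \<times> carrier_vec n)"
proof (intro equalityI subsetI)
  fix xs assume "xs \<in> vec_lists n (Suc r)"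
  then have xs: "set xs \<subseteq> carrier_vec n" "length xs = Suc r" by (auto simp: vec_lists_def)
  then have ne: "xs \<noteq> []" by auto
  then have "xs = butlast xs @ [last xs]" by simp
  moreover have "(butlast xs, last xs) \<in> vec_lists n r \<times> carrier_vec n"
    using xs ne by (auto simp: vec_lists_def dest: in_set_butlastD)
  ultimately show "xs \<in> (\<lambda>(ws, v). ws @ [v]) ` (vec_lists n r \<times> carrier_vec n)"
    by (metis (no_types, lifting) case_prod_conv image_eqI)
qed (auto simp: vec_lists_def)

context vec_space
begin

definition span_dim :: "'a vec set \<Rightarrow> nat" where
  "span_dim S = vectorspace.dim class_ring (span_vs S)"

lemma rank_eq_span_dim_cols: "rank A = span_dim (set (cols A))"
  unfolding rank_def span_dim_def ..

lemma span_dim_cong: "span S = span T \<Longrightarrow> span_dim S = span_dim T"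
  unfolding span_dim_def by simp

lemma span_dim_lin_indpt:
  assumes "U \<subseteq> carrier_vec n" "finite U" "lin_indpt U"
  shows "span_dim U = card U"
  unfolding span_dim_def using assms by (intro dim_span) (auto simp: maximal_def)

lemma span_dim_le_length: "set ws \<subseteq> carrier_vec n \<Longrightarrow> span_dim (set ws) \<le> length ws"
  using rank_le_nc[of "mat_of_cols n ws" "length ws"] by (simp add: rank_eq_span_dim_cols)

lemma maximal_lin_indpt_subset_exists:
  "finite S \<Longrightarrow> \<exists>U. maximal U (\<lambda>T. T \<subseteq> S \<and> lin_indpt T)"
  using maximal_exists_superset[of S "\<lambda>T. T \<subseteq> S \<and> lin_indpt T" "{}"]
  by (auto simp: lin_dep_def)

lemma maximal_lin_indpt_subset_span:
  assumes S: "S \<subseteq> carrier_vec n"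
    and U: "maximal U (\<lambda>T. T \<subseteq> S \<and> lin_indpt T)"
  shows "span U = span S"
proof -
  have US: "U \<subseteq> S" and li: "lin_indpt U" using U by (auto simp: maximal_def)
  have "S \<subseteq> span U"
  proof
    fix s assume s: "s \<in> S"
    show "s \<in> span U"
    proof (rule ccontr)
      assume s_out: "s \<notin> span U"
      then have "s \<notin> U" using US S span_mem by auto
      moreover have "lin_indpt (insert s U)"
        using lin_dep_iff_in_span[of U s] US S s s_out li \<open>s \<notin> U\<close> by auto
      ultimately show False using U US s unfolding maximal_def by blast
    qed
  qed
  moreover have "U \<subseteq> carrier_vec n" using US S by blast
  ultimately show ?thesis
    using span_subsetI span_is_monotone[OF US] by (intro subset_antisym) auto
qed

lemma span_dim_insert:
  assumes S: "S \<subseteq> carrier_vec n" "finite S" and v: "v \<in> carrier_vec n"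
  shows "span_dim (insert v S) = (if v \<in> span S then span_dim S else Suc (span_dim S))"
proof (cases "v \<in> span S")
  case True
  have span_eq: "span (insert v S) = span S"
  proof (rule subset_antisym)
    show "span (insert v S) \<subseteq> span S"
      using True in_own_span[OF S(1)] by (intro span_subsetI[OF S(1)]) auto
    show "span S \<subseteq> span (insert v S)" by (rule span_is_monotone) blast
  qed
  then show ?thesis using True by (simp add: span_dim_cong[OF span_eq])
next
  case False
  obtain U where U: "maximal U (\<lambda>T. T \<subseteq> S \<and> lin_indpt T)"
    using maximal_lin_indpt_subset_exists[OF S(2)] by blast
  have US: "U \<subseteq> S" and li: "lin_indpt U" using U by (auto simp: maximal_def)
  have finU: "finite U" and UC: "U \<subseteq> carrier_vec n" using US S finite_subset by auto
  have spU: "span U = span S" by (rule maximal_lin_indpt_subset_span[OF S(1) U])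
  have vU: "v \<notin> U" using False US span_mem[OF S(1)] by auto
  have li': "lin_indpt (insert v U)"
    using lin_dep_iff_in_span[OF UC li v vU] False spU by simp
  have "span (insert v U) = span (insert v S)"
  proof (rule subset_antisym)
    show "span (insert v U) \<subseteq> span (insert v S)" by (rule span_is_monotone[OF insert_mono[OF US]])
    have "S \<subseteq> span U" using in_own_span[OF S(1)] spU by simp
    also have "\<dots> \<subseteq> span (insert v U)" by (rule span_is_monotone[OF subset_insertI])
    finally have "S \<subseteq> span (insert v U)" .
    then show "span (insert v S) \<subseteq> span (insert v U)"
      using UC v in_own_span[of "insert v U"] by (intro span_subsetI[of "insert v U"]) auto
  qed
  then have "span_dim (insert v S) = card (insert v U)"
    using span_dim_cong span_dim_lin_indpt[OF _ _ li'] UC v finU by (metis finite_insert insert_subset)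
  also have "\<dots> = Suc (span_dim U)" using finU vU span_dim_lin_indpt[OF UC finU li] by simp
  finally show ?thesis using False span_dim_cong[OF spU] by simp
qed

lemma card_span_lin_indpt:
  assumes "finite (UNIV :: 'a set)"
    and U: "U \<subseteq> carrier_vec n" "finite U" "lin_indpt U"
  shows "card (span U) = card (UNIV :: 'a set) ^ card U"
proof -
  have "span U = (\<lambda>a. lincomb a U) ` (U \<rightarrow>\<^sub>E UNIV)"
  proof -
    have "span U = {lincomb a U | a. a \<in> U \<rightarrow> UNIV}" using finite_span[OF U(2)] U(1) by simp
    also have "\<dots> = (\<lambda>a. lincomb a U) ` (U \<rightarrow>\<^sub>E UNIV)"
    proof (auto)
      fix a :: "'a vec \<Rightarrow> 'a"
      have "lincomb a U = lincomb (restrict a U) U" by (rule lincomb_cong) (use U in auto)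
      then show "lincomb a U \<in> (\<lambda>a. lincomb a U) ` (U \<rightarrow>\<^sub>E UNIV)" by auto
    qed
    finally show ?thesis .
  qed
  moreover have "inj_on (\<lambda>a. lincomb a U) (U \<rightarrow>\<^sub>E UNIV)"
  proof (rule inj_onI)
    fix a b assume a: "a \<in> U \<rightarrow>\<^sub>E UNIV" and b: "b \<in> U \<rightarrow>\<^sub>E UNIV"
      and eq: "lincomb a U = lincomb b U"
    have "lincomb (\<lambda>v. a v - b v) U = lincomb a U \<ominus>\<^bsub>V\<^esub> lincomb b U"
      using lincomb_diff[OF U(2), of a b] U(1) by simp
    also have "\<dots> = 0\<^sub>v n" unfolding eq a_minus_def
      using M.r_neg[of "lincomb b U"] lincomb_closed[OF U(1), of b] by simp
    finally have "(\<lambda>v. a v - b v) \<in> U \<rightarrow> {0}"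
      using not_lindepD[OF U(3) U(2), of "\<lambda>v. a v - b v"] by auto
    then show "a = b" using a b by (simp add: PiE_def extensional_def fun_eq_iff Pi_def) metis
  qed
  ultimately have "card (span U) = card (U \<rightarrow>\<^sub>E (UNIV :: 'a set))" by (simp add: card_image)
  then show ?thesis by (simp add: card_PiE[OF U(2)])
qed

lemma card_carrier_vec:
  assumes "finite (UNIV :: 'a set)"
  shows "card (carrier_vec n :: 'a vec set) = card (UNIV :: 'a set) ^ n"
proof -
  have "card (span (set (unit_vecs n))) = card (UNIV :: 'a set) ^ card (set (unit_vecs n :: 'a vec list))"
    using card_span_lin_indpt[OF assms, of "set (unit_vecs n)"] unit_vecs_basis by (simp add: basis_def)
  then show ?thesis
    by (simp only: span_unit_vecs_is_carrier distinct_card[OF unit_vecs_distinct] unit_vecs_length)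
qed

lemma finite_carrier_vec:
  assumes "finite (UNIV :: 'a set)"
  shows "finite (carrier_vec n :: 'a vec set)"
  using card_carrier_vec[OF assms] assms card.infinite finite_UNIV_card_ge_0 by fastforce

lemma card_span:
  assumes "finite (UNIV :: 'a set)" and S: "S \<subseteq> carrier_vec n" "finite S"
  shows "card (span S) = card (UNIV :: 'a set) ^ span_dim S"
proof -
  obtain U where U: "maximal U (\<lambda>T. T \<subseteq> S \<and> lin_indpt T)"
    using maximal_lin_indpt_subset_exists[OF S(2)] by blast
  have US: "U \<subseteq> S" and li: "lin_indpt U" using U by (auto simp: maximal_def)
  have UC: "U \<subseteq> carrier_vec n" and finU: "finite U" using US S finite_subset by auto
  have spU: "span U = span S" by (rule maximal_lin_indpt_subset_span[OF S(1) U])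
  have "card (span S) = card (UNIV :: 'a set) ^ card U"
    using card_span_lin_indpt[OF assms(1) UC finU li] spU by simp
  also have "card U = span_dim S"
    using span_dim_lin_indpt[OF UC finU li] span_dim_cong[OF spU] by simp
  finally show ?thesis .
qed

lemma sum_carrier_vec_span_dim_insert:
  fixes h :: "nat \<Rightarrow> real"
  assumes fin: "finite (UNIV :: 'a set)" and S: "S \<subseteq> carrier_vec n" "finite S"
  shows "(\<Sum>v\<in>carrier_vec n. h (span_dim (insert v S))) = span_extension (card (UNIV :: 'a set)) n h (span_dim S)"
proof -
  let ?C = "carrier_vec n :: 'a vec set"
  have finC: "finite ?C" by (rule finite_carrier_vec[OF fin])
  have spC: "span S \<subseteq> ?C" using span_is_subset2[OF S(1)] by simp
  have card_sp: "card (span S) = card (UNIV :: 'a set) ^ span_dim S" by (rule card_span[OF fin S])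
  have card_le: "card (UNIV :: 'a set) ^ span_dim S \<le> card (UNIV :: 'a set) ^ n"
    using card_mono[OF finC spC] card_carrier_vec[OF fin] card_sp by simp
  have "(\<Sum>v\<in>?C. h (span_dim (insert v S)))
      = (\<Sum>v\<in>span S. h (span_dim (insert v S))) + (\<Sum>v\<in>?C - span S. h (span_dim (insert v S)))"
    using sum.subset_diff[OF spC finC] by (simp add: add.commute)
  also have "\<dots> = (\<Sum>v\<in>span S. h (span_dim S)) + (\<Sum>v\<in>?C - span S. h (Suc (span_dim S)))"
    using span_dim_insert[OF S] spC by (intro arg_cong2[where f = "(+)"] sum.cong) auto
  also have "\<dots> = real (card (span S)) * h (span_dim S) + real (card (?C - span S)) * h (Suc (span_dim S))"
    by simp
  finally show ?thesis
    using card_Diff_subset[OF finite_subset[OF spC finC] spC] card_carrier_vec[OF fin] card_sp card_le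
    by (simp add: span_extension_def of_nat_diff)
qed

lemma sum_vec_lists_span_dim:
  fixes h :: "nat \<Rightarrow> real"
  assumes fin: "finite (UNIV :: 'a set)"
  shows "(\<Sum>ws\<in>vec_lists n r. h (span_dim (set ws))) = (span_extension (card (UNIV :: 'a set)) n ^^ r) h 0"
proof (induction r arbitrary: h)
  case 0
  have "vec_lists n 0 = {[] :: 'a vec list}" by (auto simp: vec_lists_def)
  then show ?case by (simp add: span_dim_lin_indpt lin_dep_def)
next
  case (Suc r)
  have inj: "inj_on (\<lambda>(ws, v). ws @ [v]) (vec_lists n r \<times> carrier_vec n)"
    by (auto simp: inj_on_def)
  have "(\<Sum>ws\<in>vec_lists n (Suc r). h (span_dim (set ws)))
      = (\<Sum>ws\<in>vec_lists n r. \<Sum>v\<in>carrier_vec n. h (span_dim (insert v (set ws))))"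
    unfolding vec_lists_Suc sum.reindex[OF inj] sum.cartesian_product by (simp add: case_prod_unfold)
  also have "\<dots> = (\<Sum>ws\<in>vec_lists n r. span_extension (card (UNIV :: 'a set)) n h (span_dim (set ws)))"
    by (intro sum.cong refl sum_carrier_vec_span_dim_insert[OF fin]) (auto simp: vec_lists_def)
  also have "\<dots> = (span_extension (card (UNIV :: 'a set)) n ^^ Suc r) h 0"
    by (simp only: Suc.IH funpow_Suc_right comp_def)
  finally show ?case .
qed

end

section \<open>Left ideals of the matrix ring\<close>

context vec_space
begin

lemma cols_mult_mat_subset_span:
  assumes "A \<in> carrier_mat n r" "C \<in> carrier_mat r k"
  shows "set (cols (A * C)) \<subseteq> span (set (cols A))"
proof
  fix v assume "v \<in> set (cols (A * C))"
  then obtain j where j: "j < k" "v = col (A * C) j"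
    using assms by (auto simp: in_set_conv_nth)
  then have "v = A *\<^sub>v col C j" using col_mult2[OF assms j(1)] by simp
  moreover have "col C j \<in> carrier_vec r" using assms(2) by (metis carrier_matD(1) col_dim)
  ultimately show "v \<in> span (set (cols A))"
    using col_space_eq[OF assms(1)] assms(1) unfolding col_space_def by auto
qed

lemma rank_eq_span_dim_of_spanning_cols:
  assumes "A \<in> carrier_mat n k" "set ws \<subseteq> set (cols A)" "set (cols A) \<subseteq> span (set ws)"
  shows "rank A = span_dim (set ws)"
proof -
  have cA: "set (cols A) \<subseteq> carrier_vec n" using assms(1) cols_dim by blast
  then have "set ws \<subseteq> carrier_vec n" using assms(2) by blast
  then have "span (set (cols A)) = span (set ws)"
    using span_subsetI[OF _ assms(3)] span_is_monotone[OF assms(2)] by (intro subset_antisym)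
  then show ?thesis unfolding rank_eq_span_dim_cols by (rule span_dim_cong)
qed

lemma column_basis_indices:
  assumes x: "x \<in> carrier_mat n k"
  obtains js where "set js \<subseteq> {..<k}" "distinct (map (col x) js)"
    "lin_indpt (set (map (col x) js))" "length js = rank x"
    "set (cols x) \<subseteq> span (set (map (col x) js))"
proof -
  have cx: "set (cols x) \<subseteq> carrier_vec n" using x cols_dim by blast
  obtain U where U: "maximal U (\<lambda>T. T \<subseteq> set (cols x) \<and> lin_indpt T)"
    using maximal_lin_indpt_subset_exists by blast
  have US: "U \<subseteq> set (cols x)" and li: "lin_indpt U" using U by (auto simp: maximal_def)
  obtain bs where bs: "distinct bs" "set bs = U"
    using finite_distinct_list[OF finite_subset[OF US]] by auto
  have len: "length bs = rank x"
    using rank_card_indpt[OF x U] bs distinct_card by metis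
  define js where "js = map (\<lambda>b. SOME j. j < k \<and> col x j = b) bs"
  have "j < k \<and> col x j = b" if "b \<in> U" and "j = (SOME j. j < k \<and> col x j = b)" for b j
  proof -
    have "b \<in> set (cols x)" using that(1) US by blast
    then obtain i where "i < length (cols x)" "b = cols x ! i" by (metis in_set_conv_nth)
    then have "i < k \<and> col x i = b" using x by simp
    then show ?thesis unfolding that(2) by (rule someI)
  qed
  then have js: "set js \<subseteq> {..<k}" "map (col x) js = bs"
    using bs by (auto simp: js_def intro!: map_idI)
  have "span (set (cols x)) = span U" by (rule maximal_lin_indpt_subset_span[OF cx U, symmetric])
  then have "set (cols x) \<subseteq> span (set bs)" using in_own_span[OF cx] bs(2) by (simp only:)
  moreover have "length js = length bs" by (simp add: js_def)
  ultimately show thesis by (intro that[OF js(1)]) (use js(2) bs li len in simp_all)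
qed

lemma column_basis_factorization:
  assumes x: "x \<in> carrier_mat n k"
  obtains js C where "set js \<subseteq> {..<k}" "distinct (map (col x) js)"
    "lin_indpt (set (map (col x) js))" "length js = rank x"
    "C \<in> carrier_mat (rank x) k" "x = mat_of_cols n (map (col x) js) * C"
proof -
  obtain js where js: "set js \<subseteq> {..<k}" "distinct (map (col x) js)"
    "lin_indpt (set (map (col x) js))" "length js = rank x"
    and spanning: "set (cols x) \<subseteq> span (set (map (col x) js))"
    by (rule column_basis_indices[OF x])
  define X where "X = mat_of_cols n (map (col x) js)"
  have X: "X \<in> carrier_mat n (rank x)"
    using mat_of_cols_carrier(1)[of n "map (col x) js"] js(4) by (simp add: X_def)
  have "col x j \<in> carrier_vec n" for j using col_dim[of x j] x by simp
  then have cX: "cols X = map (col x) js" unfolding X_def by (intro cols_mat_of_cols) auto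
  have "\<exists>c \<in> carrier_vec (rank x). col x j = X *\<^sub>v c" if "j < k" for j
  proof -
    have "col x j \<in> set (cols x)" using that x by (metis carrier_matD(2) cols_length cols_nth nth_mem)
    then have "col x j \<in> col_space X" using spanning unfolding col_space_def cX by blast
    then obtain c where "c \<in> carrier_vec (rank x)" "X *\<^sub>v c = col x j"
      unfolding col_space_eq[OF X] using X by auto
    then show ?thesis by metis
  qed
  then obtain c where c: "c j \<in> carrier_vec (rank x)" "col x j = X *\<^sub>v c j" if "j < k" for j
    by metis
  define C where "C = mat_of_cols (rank x) (map c [0..<k])"
  have C: "C \<in> carrier_mat (rank x) k"
    using mat_of_cols_carrier(1)[of "rank x" "map c [0..<k]"] by (simp add: C_def)
  have "x = X * C"
  proof (rule mat_col_eqI)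
    fix j assume "j < dim_col (X * C)"
    then have j: "j < k" using C by simp
    then have "col C j = c j" using c(1) by (simp add: C_def)
    then show "col x j = col (X * C) j" unfolding col_mult2[OF X C j] by (simp only: c(2)[OF j])
  qed (use x X C in auto)
  then show thesis using that[OF js C] by (simp add: X_def)
qed

lemma rank_eq_0_imp_zero_mat:
  assumes x: "x \<in> carrier_mat n k" and "rank x = 0"
  shows "x = 0\<^sub>m n k"
proof -
  obtain js C where C: "C \<in> carrier_mat 0 k" and "x = mat_of_cols n (map (col x) js) * C" "length js = 0"
    using column_basis_factorization[OF x] assms(2) by metis
  then show ?thesis by (intro eq_matI) (auto simp: scalar_prod_def)
qed

lemma lin_indpt_extends_to_basis:
  assumes bs: "set bs \<subseteq> carrier_vec n" "distinct bs" "lin_indpt (set bs)"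
  obtains cs where "set cs \<subseteq> carrier_vec n" "distinct (bs @ cs)"
    "lin_indpt (set (bs @ cs))" "length (bs @ cs) = n"
proof -
  let ?S = "set bs \<union> set (unit_vecs n)"
  have SC: "?S \<subseteq> carrier_vec n" using bs by (auto simp: unit_vecs_def)
  obtain B where B: "finite B" "maximal B (\<lambda>T. T \<subseteq> ?S \<and> lin_indpt T)" "set bs \<subseteq> B"
    using maximal_exists_superset[of ?S "\<lambda>T. T \<subseteq> ?S \<and> lin_indpt T" "set bs"] bs by auto
  have BS: "B \<subseteq> ?S" and li: "lin_indpt B" using B(2) by (auto simp: maximal_def)
  have BC: "B \<subseteq> carrier_vec n" using BS SC by blast
  have "span B = span ?S" by (rule maximal_lin_indpt_subset_span[OF SC B(2)])
  moreover have "span (set (unit_vecs n)) \<subseteq> span ?S" by (rule span_is_monotone) blast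
  ultimately have "span B = carrier_vec n"
    using span_unit_vecs_is_carrier span_is_subset2[OF BC] by auto
  then have "card B = n"
    using dim_basis[OF B(1)] dim_is_n BC li by (simp add: basis_def)
  obtain cs where cs: "distinct cs" "set cs = B - set bs"
    using finite_distinct_list[of "B - set bs"] B(1) by auto
  have "set (bs @ cs) = B" using cs B(3) by auto
  moreover have "distinct (bs @ cs)" using cs bs by auto
  ultimately show thesis
    using that BC li \<open>card B = n\<close> distinct_card by (metis le_supE set_append)
qed

lemma exists_mat_mult_vec_lin_indpt:
  assumes bs: "set bs \<subseteq> carrier_vec n" "distinct bs" "lin_indpt (set bs)"
    and ws: "set ws \<subseteq> carrier_vec n" "length ws = length bs"
  obtains B where "B \<in> carrier_mat n n" "map (\<lambda>b. B *\<^sub>v b) bs = ws"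
proof -
  obtain cs where cs: "set cs \<subseteq> carrier_vec n" "distinct (bs @ cs)"
    "lin_indpt (set (bs @ cs))" "length (bs @ cs) = n"
    using lin_indpt_extends_to_basis[OF bs] by blast
  define M where "M = mat_of_cols n (bs @ cs)"
  have M: "M \<in> carrier_mat n n" using mat_of_cols_carrier(1)[of n "bs @ cs"] cs(4) by (simp add: M_def)
  have cM: "cols M = bs @ cs" using bs cs by (simp add: M_def)
  have "rank M = n" using lin_indpt_full_rank[OF M] cM cs by simp
  then obtain N where N: "N \<in> carrier_mat n n" "N * M = 1\<^sub>m n"
    using det_non_zero_imp_unit[OF M] det_rank_iff[OF M] by (auto simp: Units_def ring_mat_def)
  define W where "W = mat_of_cols n (ws @ replicate (n - length bs) (0\<^sub>v n))"
  have W: "W \<in> carrier_mat n n"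
    using mat_of_cols_carrier(1)[of n "ws @ replicate (n - length bs) (0\<^sub>v n)"] cs(4) ws(2)
    by (simp add: W_def)
  have BM: "W * N * M = W" using W N M by (simp add: assoc_mult_mat[OF W N(1) M])
  have "(W * N) *\<^sub>v (bs ! i) = ws ! i" if i: "i < length bs" for i
  proof -
    have "col M i = bs ! i"
      using i bs(1) nth_mem unfolding M_def by (subst col_mat_of_cols) (auto simp: nth_append)
    have WN: "W * N \<in> carrier_mat n n" using W N by simp
    have "i < n" using i cs(4) by simp
    have "(W * N) *\<^sub>v (bs ! i) = col (W * N * M) i"
      unfolding \<open>col M i = bs ! i\<close>[symmetric] by (rule col_mult2[OF WN M \<open>i < n\<close>, symmetric])
    also have "\<dots> = ws ! i"
      unfolding BM using i ws nth_mem unfolding W_def by (subst col_mat_of_cols) (auto simp: nth_append)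
    finally show ?thesis .
  qed
  then have "map (\<lambda>b. (W * N) *\<^sub>v b) bs = ws" using ws(2) by (intro nth_equalityI) auto
  moreover have "W * N \<in> carrier_mat n n" using W N by simp
  ultimately show thesis using that by blast
qed

lemma mult_column_basis_factorization:
  assumes x: "x \<in> carrier_mat n n" and B: "B \<in> carrier_mat n n" and js: "set js \<subseteq> {..<n}"
    and C: "C \<in> carrier_mat (length js) n" and xXC: "x = mat_of_cols n (map (col x) js) * C"
  shows "map (col (B * x)) js = map (\<lambda>b. B *\<^sub>v b) (map (col x) js)"
    and "B * x = mat_of_cols n (map (col (B * x)) js) * C"
proof -
  show cols: "map (col (B * x)) js = map (\<lambda>b. B *\<^sub>v b) (map (col x) js)"
    unfolding map_map comp_def
  proof (rule map_cong[OF refl])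
    fix j assume "j \<in> set js"
    then show "col (B * x) j = B *\<^sub>v col x j" using js by (intro col_mult2[OF B x]) auto
  qed
  define X where "X = mat_of_cols n (map (col x) js)"
  have X: "X \<in> carrier_mat n (length js)"
    using mat_of_cols_carrier(1)[of n "map (col x) js"] by (simp add: X_def)
  have BX: "B * X = mat_of_cols n (map (col (B * x)) js)"
  proof (rule mat_col_eqI)
    fix i assume "i < dim_col (mat_of_cols n (map (col (B * x)) js))"
    then have i: "i < length js" by simp
    have "col x (js ! i) \<in> carrier_vec n" using col_dim[of x] x by simp
    then have "col X i = col x (js ! i)" using i unfolding X_def by (subst col_mat_of_cols) auto
    then have "col (B * X) i = B *\<^sub>v col x (js ! i)" using col_mult2[OF B X i] by simp
    moreover have "B *\<^sub>v col x (js ! i) \<in> carrier_vec n" using B by (intro carrier_vecI) simp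
    ultimately show "col (B * X) i = col (mat_of_cols n (map (col (B * x)) js)) i"
      unfolding cols using i by (subst col_mat_of_cols) auto
  qed (use B X in simp_all)
  have "B * x = B * (X * C)" using xXC unfolding X_def by (rule arg_cong)
  also have "\<dots> = B * X * C" by (rule assoc_mult_mat[symmetric, OF B X C])
  finally show "B * x = mat_of_cols n (map (col (B * x)) js) * C" unfolding BX .
qed

lemma mat_left_ideal_bij_vec_lists:
  assumes x: "x \<in> carrier_mat n n"
  obtains js where "bij_betw (\<lambda>y. map (col y) js) (mat_left_ideal n x) (vec_lists n (rank x))"
    "\<forall>y\<in>mat_left_ideal n x. rank y = span_dim (set (map (col y) js))"
proof -
  obtain js C where js: "set js \<subseteq> {..<n}" "distinct (map (col x) js)"
    "lin_indpt (set (map (col x) js))" "length js = rank x"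
    and C: "C \<in> carrier_mat (rank x) n" and xXC: "x = mat_of_cols n (map (col x) js) * C"
    by (rule column_basis_factorization[OF x])
  define bs where "bs = map (col x) js"
  have bsC: "set bs \<subseteq> carrier_vec n" using js(1) x by (auto simp: bs_def)
  let ?\<Phi> = "\<lambda>y. map (col y) js"
  note mult = mult_column_basis_factorization[OF x _ js(1) _ xXC, unfolded js(4), OF _ C]
  have \<Phi>_carrier: "?\<Phi> (B * x) \<in> vec_lists n (rank x)" if B: "B \<in> carrier_mat n n" for B
    using B bsC js(4) by (auto simp: mult(1)[OF B] vec_lists_def bs_def)
  have reconstruct: "y = mat_of_cols n (?\<Phi> y) * C" if "y \<in> mat_left_ideal n x" for y
    using that mult(2) by (auto simp: mat_left_ideal_def)
  have "bij_betw ?\<Phi> (mat_left_ideal n x) (vec_lists n (rank x))"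
  proof (rule bij_betwI')
    fix y z assume "y \<in> mat_left_ideal n x" "z \<in> mat_left_ideal n x"
    then show "(?\<Phi> y = ?\<Phi> z) = (y = z)" using reconstruct by metis
  next
    fix y assume "y \<in> mat_left_ideal n x"
    then show "?\<Phi> y \<in> vec_lists n (rank x)" using \<Phi>_carrier by (auto simp: mat_left_ideal_def)
  next
    fix ws :: "'a vec list" assume "ws \<in> vec_lists n (rank x)"
    then have ws: "set ws \<subseteq> carrier_vec n" "length ws = length bs"
      using js(4) by (auto simp: vec_lists_def bs_def)
    obtain B where B: "B \<in> carrier_mat n n" "map (\<lambda>b. B *\<^sub>v b) bs = ws"
      using exists_mat_mult_vec_lin_indpt[OF bsC _ _ ws] js(2,3) by (auto simp: bs_def)
    then show "\<exists>y \<in> mat_left_ideal n x. ws = ?\<Phi> y"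
      using mult(1)[OF B(1)] by (auto simp: mat_left_ideal_def bs_def)
  qed
  moreover have "rank y = span_dim (set (?\<Phi> y))" if y: "y \<in> mat_left_ideal n x" for y
  proof (rule rank_eq_span_dim_of_spanning_cols)
    obtain B where B: "B \<in> carrier_mat n n" and "y = B * x"
      using y by (auto simp: mat_left_ideal_def)
    then show yC: "y \<in> carrier_mat n n" using x by simp
    show "set (?\<Phi> y) \<subseteq> set (cols y)"
      using js(1) yC by (auto simp: cols_def)
    have "?\<Phi> y \<in> vec_lists n (rank x)" using \<Phi>_carrier[OF B] \<open>y = B * x\<close> by simp
    then have M: "mat_of_cols n (?\<Phi> y) \<in> carrier_mat n (rank x)"
      and cM: "cols (mat_of_cols n (?\<Phi> y)) = ?\<Phi> y"
      using mat_of_cols_carrier(1)[of n "?\<Phi> y"] by (auto simp: vec_lists_def)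
    have "set (cols (mat_of_cols n (?\<Phi> y) * C)) \<subseteq> span (set (cols (mat_of_cols n (?\<Phi> y))))"
      by (rule cols_mult_mat_subset_span[OF M C])
    then show "set (cols y) \<subseteq> span (set (?\<Phi> y))"
      unfolding cM reconstruct[OF y, symmetric] .
  qed
  ultimately show thesis using that by blast
qed

lemma rank_le_of_mem_mat_left_ideal:
  assumes "x \<in> carrier_mat n n" "y \<in> mat_left_ideal n x"
  shows "rank y \<le> rank x"
proof -
  obtain js where bij: "bij_betw (\<lambda>y. map (col y) js) (mat_left_ideal n x) (vec_lists n (rank x))"
    and rk: "\<forall>y\<in>mat_left_ideal n x. rank y = span_dim (set (map (col y) js))"
    by (rule mat_left_ideal_bij_vec_lists[OF assms(1)])
  have "map (col y) js \<in> vec_lists n (rank x)" using bij_betwE[OF bij] assms(2) by blast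
  then have "span_dim (set (map (col y) js)) \<le> rank x"
    using span_dim_le_length[of "map (col y) js"] by (simp add: vec_lists_def)
  then show ?thesis using rk assms(2) by simp
qed

context
  assumes fin: "finite (UNIV :: 'a set)"
begin

lemma card_mat_left_ideal:
  assumes "x \<in> carrier_mat n n"
  shows "card (mat_left_ideal n x) = (card (UNIV :: 'a set) ^ n) ^ rank x"
proof -
  obtain js where "bij_betw (\<lambda>y. map (col y) js) (mat_left_ideal n x) (vec_lists n (rank x))"
    by (rule mat_left_ideal_bij_vec_lists[OF assms])
  then show ?thesis
    using bij_betw_same_card card_lists_length_eq[OF finite_carrier_vec[OF fin]] card_carrier_vec[OF fin]
    by (metis vec_lists_def)
qed

lemma finite_mat_left_ideal:
  fixes x :: "'a mat"
  assumes "x \<in> carrier_mat n n"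
  shows "finite (mat_left_ideal n x)"
proof -
  have "0 < card (UNIV :: 'a set)" using fin by (simp add: finite_UNIV_card_ge_0)
  then have "0 < card (mat_left_ideal n x)" unfolding card_mat_left_ideal[OF assms] by simp
  then show ?thesis by (rule card_ge_0_finite)
qed

lemma sum_mat_left_ideal_rank:
  fixes h :: "nat \<Rightarrow> real"
  assumes "x \<in> carrier_mat n n"
  shows "(\<Sum>y\<in>mat_left_ideal n x. h (rank y)) = (span_extension (card (UNIV :: 'a set)) n ^^ rank x) h 0"
proof -
  obtain js where bij: "bij_betw (\<lambda>y. map (col y) js) (mat_left_ideal n x) (vec_lists n (rank x))"
    and rk: "\<forall>y\<in>mat_left_ideal n x. rank y = span_dim (set (map (col y) js))"
    by (rule mat_left_ideal_bij_vec_lists[OF assms])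
  have "(\<Sum>y\<in>mat_left_ideal n x. h (rank y)) = (\<Sum>y\<in>mat_left_ideal n x. h (span_dim (set (map (col y) js))))"
    using rk by simp
  also have "\<dots> = (\<Sum>ws\<in>vec_lists n (rank x). h (span_dim (set ws)))"
    by (rule sum.reindex_bij_betw[OF bij])
  finally show ?thesis using sum_vec_lists_span_dim[OF fin] by simp
qed

end

end

lemma mat_left_ideal_subset_carrier: "x \<in> carrier_mat m m \<Longrightarrow> mat_left_ideal m x \<subseteq> carrier_mat m m"
  by (auto simp: mat_left_ideal_def)

lemma mat_left_ideal_self: "x \<in> carrier_mat m m \<Longrightarrow> x \<in> mat_left_ideal m x"
  unfolding mat_left_ideal_def by (intro CollectI exI[of _ "1\<^sub>m m"]) auto

lemma mat_left_ideal_mono: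
  assumes x: "x \<in> carrier_mat m m" and y: "y \<in> mat_left_ideal m x"
  shows "mat_left_ideal m y \<subseteq> mat_left_ideal m x"
proof
  fix z assume "z \<in> mat_left_ideal m y"
  then obtain B C where B: "B \<in> carrier_mat m m" "y = B * x" and C: "C \<in> carrier_mat m m" "z = C * y"
    using y by (auto simp: mat_left_ideal_def)
  then have "z = (C * B) * x" using x by simp
  then show "z \<in> mat_left_ideal m x" using B C by (auto simp: mat_left_ideal_def)
qed

section \<open>Normalized homogeneous weights\<close>

lemma normalized_homogeneous_weight_cong:
  assumes "\<And>A. A \<in> carrier_mat m m \<Longrightarrow> w A = w' A"
  shows "normalized_homogeneous_weight m w \<longleftrightarrow> normalized_homogeneous_weight m w'"
proof -
  have "(\<Sum>y\<in>mat_left_ideal m x. w y) = (\<Sum>y\<in>mat_left_ideal m x. w' y)" if "x \<in> carrier_mat m m" for x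
    using assms mat_left_ideal_subset_carrier[OF that] by (intro sum.cong) auto
  then show ?thesis using assms unfolding normalized_homogeneous_weight_def by auto
qed

lemma normalized_homogeneous_weight_unique:
  fixes w w' :: "'a::field mat \<Rightarrow> real"
  assumes fin: "\<And>x :: 'a mat. x \<in> carrier_mat m m \<Longrightarrow> finite (mat_left_ideal m x)"
    and w: "normalized_homogeneous_weight m w" and w': "normalized_homogeneous_weight m w'"
  shows "x \<in> carrier_mat m m \<Longrightarrow> w x = w' x"
proof (induction "card (mat_left_ideal m x)" arbitrary: x rule: less_induct)
  case less
  note x = less.prems
  let ?I = "mat_left_ideal m x"
  show ?case
  proof (cases "x = 0\<^sub>m m m")
    case True
    then show ?thesis using w w' unfolding normalized_homogeneous_weight_def by simp
  next
    case False
    let ?G = "{y \<in> ?I. mat_left_ideal m y = ?I}"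
    have finI: "finite ?I" using fin[OF x] .
    have IC: "?I \<subseteq> carrier_mat m m" using mat_left_ideal_subset_carrier[OF x] .
    have "w y = w x" "w' y = w' x" if "y \<in> ?G" for y
      using w w' x that IC unfolding normalized_homogeneous_weight_def by blast+
    then have sum_G: "(\<Sum>y\<in>?G. w y) = card ?G * w x" "(\<Sum>y\<in>?G. w' y) = card ?G * w' x"
      by simp_all
    have sum_rest: "(\<Sum>y\<in>?I - ?G. w y) = (\<Sum>y\<in>?I - ?G. w' y)"
    proof (rule sum.cong[OF refl])
      fix y assume y: "y \<in> ?I - ?G"
      then have "mat_left_ideal m y \<subset> ?I" using mat_left_ideal_mono[OF x] by blast
      then have "card (mat_left_ideal m y) < card ?I" using finI psubset_card_mono by blast
      then show "w y = w' y" using less.hyps y IC by blast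
    qed
    have "(\<Sum>y\<in>?I. w y) = (\<Sum>y\<in>?I. w' y)"
      using w w' False x unfolding normalized_homogeneous_weight_def by simp
    then have "card ?G * w x = card ?G * w' x"
      using sum.subset_diff[of ?G ?I w] sum.subset_diff[of ?G ?I w'] finI sum_G sum_rest by auto
    moreover have "card ?G > 0"
      using mat_left_ideal_self[OF x] finite_subset[of ?G ?I] finI card_gt_0_iff by blast
    ultimately show ?thesis by simp
  qed
qed

lemma card_UNIV_field_ge_2: "finite (UNIV :: 'a::field set) \<Longrightarrow> 2 \<le> card (UNIV :: 'a set)"
  using card_mono[of "UNIV :: 'a set" "{0, 1}"] by simp

lemma (in vec_space) normalized_homogeneous_weight_rank:
  assumes fin: "finite (UNIV :: 'a set)"
  shows "normalized_homogeneous_weight n (\<lambda>A :: 'a mat. 1 - mobius_ratio (card (UNIV :: 'a set)) n (rank A))"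
  unfolding normalized_homogeneous_weight_def
proof (intro conjI ballI impI)
  show "1 - mobius_ratio (card (UNIV :: 'a set)) n (rank (0\<^sub>m n n :: 'a mat)) = 0"
    by (simp add: rank_0I mobius_ratio_def alpha_def choose_two)
next
  fix x y :: "'a mat" assume "x \<in> carrier_mat n n" "y \<in> carrier_mat n n"
    and "mat_left_ideal n x = mat_left_ideal n y"
  then have "rank x = rank y"
    using rank_le_of_mem_mat_left_ideal mat_left_ideal_self by (metis le_antisym)
  then show "1 - mobius_ratio (card (UNIV :: 'a set)) n (rank x)
    = 1 - mobius_ratio (card (UNIV :: 'a set)) n (rank y)" by simp
next
  fix x :: "'a mat" assume x: "x \<in> carrier_mat n n" and nz: "x \<noteq> 0\<^sub>m n n"
  let ?q = "card (UNIV :: 'a set)"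
  have "1 \<le> rank x" using rank_eq_0_imp_zero_mat[OF x] nz by (cases "rank x") auto
  then obtain k where k: "rank x = Suc k" by (cases "rank x") auto
  have "k < n" using rank_le_nc[OF x] k by simp
  have "(\<Sum>y\<in>mat_left_ideal n x. 1 - mobius_ratio ?q n (rank y))
      = (span_extension ?q n ^^ rank x) (\<lambda>s. 1 - mobius_ratio ?q n s) 0"
    by (rule sum_mat_left_ideal_rank[OF fin x])
  also have "\<dots> = (real ?q ^ n) ^ rank x"
    unfolding funpow_span_extension_one_minus k
    using funpow_span_extension_mobius_ratio[OF card_UNIV_field_ge_2[OF fin], of 0 k n] \<open>k < n\<close> by simp
  also have "\<dots> = real (card (mat_left_ideal n x))" using card_mat_left_ideal[OF fin x] by simp
  finally show "(\<Sum>y\<in>mat_left_ideal n x. 1 - mobius_ratio ?q n (rank y)) = real (card (mat_left_ideal n x))" .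
qed

theorem theorem3p2:
  fixes w :: "'a::field mat \<Rightarrow> real" and m q :: nat
  assumes "finite (UNIV :: 'a set)"
    and "q = card (UNIV :: 'a set)"
    and "m > 1"
  shows "normalized_homogeneous_weight m w \<longleftrightarrow>
    (\<forall>A\<in>carrier_mat m m.
       w A = (let r = vec_space.rank m A in
               (-1) ^ (r + 1) * real q ^ (r choose 2) / alpha q r (real q ^ m) + 1))"
proof -
  define W where "W = (\<lambda>A :: 'a mat. 1 - mobius_ratio q m (vec_space.rank m A))"
  have W: "normalized_homogeneous_weight m W"
    unfolding W_def assms(2) by (rule vec_space.normalized_homogeneous_weight_rank[OF assms(1)])
  have "(let r = vec_space.rank m A in
          (-1) ^ (r + 1) * real q ^ (r choose 2) / alpha q r (real q ^ m) + 1) = W A" for A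
    by (simp add: W_def mobius_ratio_def Let_def)
  moreover have "normalized_homogeneous_weight m w \<longleftrightarrow> (\<forall>A\<in>carrier_mat m m. w A = W A)"
    using normalized_homogeneous_weight_unique[OF vec_space.finite_mat_left_ideal[OF assms(1)] _ W]
      normalized_homogeneous_weight_cong[of m w W] W by blast
  ultimately show ?thesis by simp
qed

end
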